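(* Let $A$ be a real $n\times n$ matrix, viewed as a linear operator on $H=\mathbb{R}^n$ with the Euclidean inner product $\langle\cdot,\cdot\rangle$ and norm $\|\cdot\|$, and let $\lambda$ be a real eigenvalue of $A$. Suppose there exists a sequence of triples $(\varepsilon_k,\eta_k,u_k)\in\mathbb{R}\times\mathbb{R}\times H$, $k\in\mathbb{N}$, such that for every $k$ $$(A-\lambda I)u_k=\varepsilon_k\big(|u_k|+\eta_k u_k\big),\qquad \varepsilon_k\neq 0,\qquad \|u_k\|=1,$$ and $(\varepsilon_k,\eta_k,u_k)\to(0,\eta_0,u_0)$ as $k\to\infty$ for some $\eta_0\in\mathbb{R}$, $u_0\in H$. Then necessarily $u_0\in\operatorname{Ker}(A-\lambda I)$, $u_0\neq 0$, and $$\langle |u_0|+\eta_0u_0,\,v\rangle=0\quad\text{for all } v\in\operatorname{Ker}(A^{*}-\lambda I),$$ i.e. the orthogonal projection of $|u_0|+\eta_0u_0$ onto $\operatorname{Ker}(A^*-\lambda I)$ is zero.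
   Context: $A^*$ denotes the transpose of $A$. For $u=[u_1,\dots,u_n]^t\in\mathbb{R}^n$, $|u|:=[|u_1|,\dots,|u_n|]^t$ (componentwise absolute value). The equation $(A-\lambda I)u=\varepsilon(|u|+\eta u)$ is the Fučík problem $Au=\alpha u^+-\beta u^-$ rewritten via $\alpha=\varepsilon(\eta+1)+\lambda$, $\beta=\varepsilon(\eta-1)+\lambda$, where $u^\pm$ are the componentwise positive and negative parts ($u_i^+=\max\{u_i,0\}$, $u_i^-=\max\{-u_i,0\}$). *)

theory Defs
  imports "HOL-Analysis.Analysis"
begin

definition vabs :: "real ^ 'n \<Rightarrow> real ^ 'n" where
  "vabs u = (\<chi> i. \<bar>u $ i\<bar>)"

definition mker :: "real ^ 'n ^ 'n \<Rightarrow> (real ^ 'n) set" where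
  "mker M = {v. M *v v = 0}"

end

theory Submission
  imports Defs
begin

text \<open>Write \<open>B = A - \<lambda>I\<close> and \<open>w\<^sub>k = |u\<^sub>k| + \<eta>\<^sub>k u\<^sub>k\<close>, so that \<open>B u\<^sub>k = \<epsilon>\<^sub>k w\<^sub>k\<close>.
  Since \<open>w\<^sub>k\<close> converges and \<open>\<epsilon>\<^sub>k \<rightarrow> 0\<close>, passing to the limit gives \<open>B u\<^sub>0 = 0\<close>, and
  \<open>\<parallel>u\<^sub>0\<parallel> = 1\<close> by continuity of the norm. Since \<open>\<epsilon>\<^sub>k \<noteq> 0\<close>, each \<open>w\<^sub>k\<close> lies in the range
  of \<open>B\<close>, which is orthogonal to \<open>Ker B\<^sup>*\<close>; this closed condition survives the limit.\<close>

lemma tendsto_vabs [tendsto_intros]: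
  "(f \<longlongrightarrow> l) F \<Longrightarrow> ((\<lambda>x. vabs (f x)) \<longlongrightarrow> vabs l) F"
  unfolding vabs_def by (intro tendsto_vec_lambda tendsto_rabs tendsto_vec_nth)

lemma transpose_diff: "transpose (A - B) = transpose A - transpose (B :: 'a::ab_group_add ^'n^'m)"
  by (simp add: transpose_def vec_eq_iff)

lemma inner_matrix_vector_mul_kernel_transpose:
  fixes B :: "real ^'n^'m"
  assumes "transpose B *v v = 0"
  shows "(B *v x) \<bullet> v = 0"
  by (metis assms dot_lmul_matrix inner_commute inner_zero_left transpose_matrix_vector)

lemma bounded_linear_limit_in_kernel:
  assumes f: "bounded_linear f"
    and eq: "\<And>k. f (u k) = eps k *\<^sub>R w k"
    and "u \<longlonglongrightarrow> u0" and "eps \<longlonglongrightarrow> 0" and "w \<longlonglongrightarrow> w0"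
  shows "f u0 = 0"
proof (rule LIMSEQ_unique)
  show "(\<lambda>k. f (u k)) \<longlonglongrightarrow> f u0"
    using bounded_linear.tendsto[OF f \<open>u \<longlonglongrightarrow> u0\<close>] .
  have "(\<lambda>k. eps k *\<^sub>R w k) \<longlonglongrightarrow> 0 *\<^sub>R w0"
    by (intro tendsto_intros assms)
  then show "(\<lambda>k. f (u k)) \<longlonglongrightarrow> 0"
    by (simp add: eq)
qed

lemma limit_orthogonal_to_range:
  fixes w :: "nat \<Rightarrow> 'b::real_inner"
  assumes eq: "\<And>k. f (u k) = eps k *\<^sub>R w k"
    and nz: "\<And>k. eps k \<noteq> 0"
    and orth: "\<And>x. f x \<bullet> v = 0"
    and "w \<longlonglongrightarrow> w0"
  shows "w0 \<bullet> v = 0"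
proof (rule LIMSEQ_unique)
  show "(\<lambda>k. w k \<bullet> v) \<longlonglongrightarrow> w0 \<bullet> v"
    by (intro tendsto_intros \<open>w \<longlonglongrightarrow> w0\<close>)
  have "w k \<bullet> v = 0" for k
    using orth[of "u k"] nz[of k] by (simp add: eq)
  then show "(\<lambda>k. w k \<bullet> v) \<longlonglongrightarrow> 0"
    by simp
qed

theorem theorem1:
  fixes A :: "real ^ 'n ^ 'n" and lam :: real
    and eps eta :: "nat \<Rightarrow> real" and u :: "nat \<Rightarrow> real ^ 'n"
    and eta0 :: real and u0 :: "real ^ 'n"
  assumes eig: "\<exists>v. v \<noteq> 0 \<and> A *v v = lam *\<^sub>R v"
    and eq: "\<And>k. (A - lam *\<^sub>R mat 1) *v u k = eps k *\<^sub>R (vabs (u k) + eta k *\<^sub>R u k)"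
    and nz: "\<And>k. eps k \<noteq> 0"
    and nrm: "\<And>k. norm (u k) = 1"
    and lim_eps: "eps \<longlonglongrightarrow> 0"
    and lim_eta: "eta \<longlonglongrightarrow> eta0"
    and lim_u: "u \<longlonglongrightarrow> u0"
  shows "u0 \<in> mker (A - lam *\<^sub>R mat 1) \<and> u0 \<noteq> 0 \<and>
         (\<forall>v \<in> mker (transpose A - lam *\<^sub>R mat 1). (vabs u0 + eta0 *\<^sub>R u0) \<bullet> v = 0)"
proof -
  define B where "B = A - lam *\<^sub>R mat 1"
  have transpose_B: "transpose B = transpose A - lam *\<^sub>R mat 1"
    by (simp add: B_def transpose_diff transpose_scalar)
  have lim_w: "(\<lambda>k. vabs (u k) + eta k *\<^sub>R u k) \<longlonglongrightarrow> vabs u0 + eta0 *\<^sub>R u0"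
    by (intro tendsto_intros lim_u lim_eta)
  have "B *v u0 = 0"
    using bounded_linear_limit_in_kernel[OF matrix_vector_mul_bounded_linear eq[folded B_def]
        lim_u lim_eps lim_w] .
  moreover have "u0 \<noteq> 0"
    using LIMSEQ_unique[OF tendsto_norm[OF lim_u]] nrm by force
  moreover have "(vabs u0 + eta0 *\<^sub>R u0) \<bullet> v = 0"
    if "(transpose A - lam *\<^sub>R mat 1) *v v = 0" for v
    using limit_orthogonal_to_range[where f = "(*v) B", OF eq[folded B_def] nz
        inner_matrix_vector_mul_kernel_transpose lim_w] that transpose_B by metis
  ultimately show ?thesis
    unfolding mker_def B_def by blast
qed

end
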